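(* Assume the bounded-cost assumption, $J\ge2$, and $T=\Omega(J^2\bar L_T)$ where $\bar L_T=\max_jL^j_T$. If all agents use POMWU with learning rate $\eta^\star=\Theta\big(J^{-1/2}T^{-1/4}[\ln K(\bar L_T+m)]^{1/4}\big)$, then the map $\hat{\boldsymbol\nu}_T$ is an $\varepsilon$-contextual coarse correlated equilibrium with $$\varepsilon=O\big([\ln K(\bar L_T+m)]^{3/4}T^{-3/4}J^{1/2}\big).$$
   Context: Setting. There are $J$ agents indexed by $j\in[J]$. Agent $j$ has a finite action set $\mathcal A^j=\{a^j_1,\dots,a^j_K\}$ with $K$ elements; $\mathcal A=\prod_i\mathcal A^i$, $\mathcal A^{-j}=\prod_{i\ne j}\mathcal A^i$. $\Delta_K$ is the probability simplex in $\mathbb R^K$, $w\in\Delta_K$ identified with a distribution on $\mathcal A^j$; $\mathscr P(S)$ is the set of distributions on a finite set $S$. The context set $\mathcal Z=\{z_1,\dots,z_m\}\subset\mathbb R^d$ is finite with $m$ elements. Agent $j$ has $\phi^j:\mathcal A\to\mathbb R^d$ and cost $c^j(\mathbf w,Z)=\mathbb E_{\mathbf a\sim\mathbf w}[\langle\phi^j(\mathbf a),Z\rangle]$; $c^j(w,\mathbf w^{-j},Z)=c^j(w\otimes\mathbf w^{-j},Z)$. $\Phi^j(\mathbf w^{-j})\in\mathbb R^{d\times K}$ has entries $\Phi^j(\mathbf w^{-j})_{\ell,k}=\mathbb E_{\mathbf a^{-j}\sim\mathbf w^{-j}}[\phi^j(a^j_k,\mathbf a^{-j})[\ell]]$. Bounded-cost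 assumption: $|\langle Z,\phi^j(\mathbf a)\rangle|\le1$ for all $j,\mathbf a,Z$. Game protocol: $T$ rounds, fixed sequence $Z_1,\dots,Z_T\in\mathcal Z$; at round $t$ each agent $j$ receives a prediction $\hat Z^j_t\in\mathcal Z$, plays $w^j_t\in\Delta_K$, incurs $c^j(w^j_t,\mathbf w^{-j}_t,Z_t)$ with $\mathbf w^{-j}_t=\bigotimes_{i\ne j}w^i_t$, and observes $Z_t$ and $\Phi^j(\mathbf w^{-j}_t)$. $\mathscr T^z=\{t:Z_t=z\}$, $n_z=|\mathscr T^z|$, $L^j_T=\sum_{t}\mathbf 1\{\hat Z^j_t\ne Z_t\}$. POMWU with learning rate $\eta>0$ (for agent $j$): maintain for each $z\in\mathcal Z$ a vector $\rho_z\in\mathbb R^K_{>0}$, initialized to $(1/K,\dots,1/K)$, and a matrix $\Psi_z\in\mathbb R^{d\times K}$, initialized to $0$. At round $t$, with $\hat Z=\hat Z^j_t$, play $w^j_t[\ell]=\rho_{\hat Z}[\ell]\exp(-\eta(\Psi_{\hat Z}^\top\hat Z)[\ell])/\sum_{k=1}^K\rho_{\hat Z}[k]\exp(-\eta(\Psi_{\hat Z}^\top\hat Z)[k])$. After observing $Z_t$ and $\Phi_t=\Phi^j(\mathbf w^{-j}_t)$, set $\Psi_{Z_t}\leftarrow\Phi_t$ and $\rho_{Z_t}[\ell]\leftarrow\rho_{Z_t}[\ell]\exp(-\eta(\Phi_t^\top Z_t)[\ell])$ for all $\ell$. $\hat{\boldsymbol\nu}_T:\mathcal Z\to\mathscr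 P(\mathcal A)$: $\hat{\boldsymbol\nu}_T(z)=n_z^{-1}\sum_{t\in\mathscr T^z}w^1_t\otimes\dots\otimes w^J_t$ if $n_z>0$, the uniform distribution on $\mathcal A$ otherwise. For $\boldsymbol\nu:\mathcal Z\to\mathscr P(\mathcal A)$, $\boldsymbol\nu^{-j}(z)$ is the marginal of $\boldsymbol\nu(z)$ on $\mathcal A^{-j}$. An $\varepsilon$-contextual coarse correlated equilibrium is $\boldsymbol\nu:\mathcal Z\to\mathscr P(\mathcal A)$ such that for every $j$ and every $\pi:\mathcal Z\to\Delta_K$, $T^{-1}\sum_tc^j(\boldsymbol\nu(Z_t),Z_t)\le T^{-1}\sum_tc^j(\pi(Z_t),\boldsymbol\nu^{-j}(Z_t),Z_t)+\varepsilon$. $O,\Omega,\Theta$ hide absolute constants. *)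

theory Defs
  imports Complex_Main "HOL-Library.FuncSet"
begin

text \<open>Agents are 0..<J, actions of each agent are 0..<K, contexts are vectors
  in R^d represented as functions nat => real vanishing from index d on.\<close>

definition ip :: "nat \<Rightarrow> (nat \<Rightarrow> real) \<Rightarrow> (nat \<Rightarrow> real) \<Rightarrow> real" where
  "ip d x y = (\<Sum>i<d. x i * y i)"

definition vecs :: "nat \<Rightarrow> (nat \<Rightarrow> real) set" where
  "vecs d = {z. \<forall>i\<ge>d. z i = 0}"

definition simplex :: "nat \<Rightarrow> (nat \<Rightarrow> real) set" where
  "simplex K = {w. (\<forall>k<K. 0 \<le> w k) \<and> (\<Sum>k<K. w k) = 1}"

definition profiles :: "nat \<Rightarrow> nat \<Rightarrow> (nat \<Rightarrow> nat) set" where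
  "profiles J K = PiE {..<J} (\<lambda>_. {..<K})"

definition others :: "nat \<Rightarrow> nat \<Rightarrow> nat \<Rightarrow> (nat \<Rightarrow> nat) set" where
  "others J K j = PiE ({..<J} - {j}) (\<lambda>_. {..<K})"

definition Phi :: "nat \<Rightarrow> nat \<Rightarrow> (nat \<Rightarrow> (nat \<Rightarrow> nat) \<Rightarrow> nat \<Rightarrow> real)
    \<Rightarrow> (nat \<Rightarrow> nat \<Rightarrow> real) \<Rightarrow> nat \<Rightarrow> nat \<Rightarrow> nat \<Rightarrow> real" where
  "Phi J K phi W j k = (\<lambda>l. \<Sum>b\<in>others J K j.
      (\<Prod>i\<in>{..<J} - {j}. W i (b i)) * phi j (b(j := k)) l)"

text \<open>POMWU play given the state (rho_z, Psi_z) and prediction zh.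
  Psi z l is the l-th column of Psi_z, so (Psi_z^T zh)[l] = ip d (Psi z l) zh.\<close>
definition mwu_play :: "nat \<Rightarrow> nat \<Rightarrow> real \<Rightarrow> ((nat \<Rightarrow> real) \<Rightarrow> nat \<Rightarrow> real)
    \<Rightarrow> ((nat \<Rightarrow> real) \<Rightarrow> nat \<Rightarrow> nat \<Rightarrow> real) \<Rightarrow> (nat \<Rightarrow> real) \<Rightarrow> nat \<Rightarrow> real" where
  "mwu_play K d eta rho Psi zh = (\<lambda>l.
      rho zh l * exp (- eta * ip d (Psi zh l) zh) /
      (\<Sum>k<K. rho zh k * exp (- eta * ip d (Psi zh k) zh)))"

text \<open>Joint state of all agents running POMWU: for agent j and context z,
  fst gives rho_z and snd gives Psi_z (by columns). Rounds are t = 0..<T,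
  Zs t is the true context, preds j t the prediction of agent j.\<close>
primrec pomwu_state :: "nat \<Rightarrow> nat \<Rightarrow> nat \<Rightarrow> (nat \<Rightarrow> (nat \<Rightarrow> nat) \<Rightarrow> nat \<Rightarrow> real)
    \<Rightarrow> (nat \<Rightarrow> nat \<Rightarrow> real) \<Rightarrow> (nat \<Rightarrow> nat \<Rightarrow> nat \<Rightarrow> real) \<Rightarrow> real \<Rightarrow> nat
    \<Rightarrow> (nat \<Rightarrow> (nat \<Rightarrow> real) \<Rightarrow> nat \<Rightarrow> real) \<times> (nat \<Rightarrow> (nat \<Rightarrow> real) \<Rightarrow> nat \<Rightarrow> nat \<Rightarrow> real)"
  where
  "pomwu_state J K d phi Zs preds eta 0 = ((\<lambda>j z l. 1 / real K), (\<lambda>j z l. (\<lambda>_. 0)))"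
| "pomwu_state J K d phi Zs preds eta (Suc t) =
     (let st = pomwu_state J K d phi Zs preds eta t;
          W = (\<lambda>j. mwu_play K d eta (fst st j) (snd st j) (preds j t))
      in ((\<lambda>j z l. if z = Zs t
                    then fst st j z l * exp (- eta * ip d (Phi J K phi W j l) (Zs t))
                    else fst st j z l),
          (\<lambda>j z l. if z = Zs t then Phi J K phi W j l else snd st j z l)))"

definition pomwu_play :: "nat \<Rightarrow> nat \<Rightarrow> nat \<Rightarrow> (nat \<Rightarrow> (nat \<Rightarrow> nat) \<Rightarrow> nat \<Rightarrow> real)
    \<Rightarrow> (nat \<Rightarrow> nat \<Rightarrow> real) \<Rightarrow> (nat \<Rightarrow> nat \<Rightarrow> nat \<Rightarrow> real) \<Rightarrow> real \<Rightarrow> nat \<Rightarrow> nat \<Rightarrow> nat \<Rightarrow> real"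
  where
  "pomwu_play J K d phi Zs preds eta t j =
     (let st = pomwu_state J K d phi Zs preds eta t
      in mwu_play K d eta (fst st j) (snd st j) (preds j t))"

definition nu_hat :: "nat \<Rightarrow> nat \<Rightarrow> (nat \<Rightarrow> nat \<Rightarrow> real) \<Rightarrow> nat
    \<Rightarrow> (nat \<Rightarrow> nat \<Rightarrow> nat \<Rightarrow> real) \<Rightarrow> (nat \<Rightarrow> real) \<Rightarrow> (nat \<Rightarrow> nat) \<Rightarrow> real" where
  "nu_hat J K Zs T W z a =
     (if a \<notin> profiles J K then 0
      else if card {t. t < T \<and> Zs t = z} > 0
      then (\<Sum>t\<in>{t. t < T \<and> Zs t = z}. \<Prod>i<J. W t i (a i)) / real (card {t. t < T \<and> Zs t = z})
      else 1 / real K ^ J)"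

definition cost :: "nat \<Rightarrow> nat \<Rightarrow> nat \<Rightarrow> (nat \<Rightarrow> (nat \<Rightarrow> nat) \<Rightarrow> nat \<Rightarrow> real)
    \<Rightarrow> ((nat \<Rightarrow> nat) \<Rightarrow> real) \<Rightarrow> nat \<Rightarrow> (nat \<Rightarrow> real) \<Rightarrow> real" where
  "cost J K d phi nu j z = (\<Sum>a\<in>profiles J K. nu a * ip d (phi j a) z)"

definition marg_minus :: "nat \<Rightarrow> ((nat \<Rightarrow> nat) \<Rightarrow> real) \<Rightarrow> nat \<Rightarrow> (nat \<Rightarrow> nat) \<Rightarrow> real" where
  "marg_minus K nu j b = (\<Sum>k<K. nu (b(j := k)))"

definition dev_cost :: "nat \<Rightarrow> nat \<Rightarrow> nat \<Rightarrow> (nat \<Rightarrow> (nat \<Rightarrow> nat) \<Rightarrow> nat \<Rightarrow> real)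
    \<Rightarrow> (nat \<Rightarrow> real) \<Rightarrow> ((nat \<Rightarrow> nat) \<Rightarrow> real) \<Rightarrow> nat \<Rightarrow> (nat \<Rightarrow> real) \<Rightarrow> real" where
  "dev_cost J K d phi w nu j z =
     (\<Sum>b\<in>others J K j. \<Sum>k<K. w k * marg_minus K nu j b * ip d (phi j (b(j := k))) z)"

definition contextual_CCE :: "nat \<Rightarrow> nat \<Rightarrow> nat \<Rightarrow> (nat \<Rightarrow> (nat \<Rightarrow> nat) \<Rightarrow> nat \<Rightarrow> real)
    \<Rightarrow> (nat \<Rightarrow> real) set \<Rightarrow> (nat \<Rightarrow> nat \<Rightarrow> real) \<Rightarrow> nat
    \<Rightarrow> ((nat \<Rightarrow> real) \<Rightarrow> (nat \<Rightarrow> nat) \<Rightarrow> real) \<Rightarrow> real \<Rightarrow> bool" where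
  "contextual_CCE J K d phi Zset Zs T nu eps \<longleftrightarrow>
     (\<forall>j<J. \<forall>\<pi>. (\<forall>z\<in>Zset. \<pi> z \<in> simplex K) \<longrightarrow>
        (\<Sum>t<T. cost J K d phi (nu (Zs t)) j (Zs t)) / real T
          \<le> (\<Sum>t<T. dev_cost J K d phi (\<pi> (Zs t)) (nu (Zs t)) j (Zs t)) / real T + eps)"

definition Lbar :: "nat \<Rightarrow> nat \<Rightarrow> (nat \<Rightarrow> nat \<Rightarrow> nat \<Rightarrow> real) \<Rightarrow> (nat \<Rightarrow> nat \<Rightarrow> real) \<Rightarrow> nat" where
  "Lbar J T preds Zs = Max ((\<lambda>j. card {t. t < T \<and> preds j t \<noteq> Zs t}) ` {..<J})"

end

theory Submission
  imports Defs "HOL-Analysis.Convex"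
begin

(* Restricted to the rounds with a given context, the POMWU learner of an agent whose prediction
   is correct is optimistic Hedge with the last loss vector seen in that context as hint.  The
   potential argument for optimistic Hedge bounds its regret by ln K / eta per context plus eta
   times the squared hint errors.  If all other agents predicted correctly both in the current
   round and at the previous visit of its context, their strategies are softmaxes of hinted losses
   that moved by at most 3, so in total variation they moved by O(eta), and the hint error is
   O(eta J).  The other rounds are the first visits of contexts and the rounds touched by a
   misprediction, at most m + 2 J L of them, and each round in which the agent itself mispredicted
   costs at most 2 more.  This gives regret at most
   2 L + m ln K / eta + eta (576 eta^2 J^2 T + O(m + J L)), which the choice of eta balances.
   Finally, the cost of the empirical map and of any deviation from it are averages of realized
   costs, so its equilibrium gap is the regret divided by T. *)

lemma exp_le_one_plus_self_plus_square:
  fixes y :: real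
  assumes "y \<le> 1"
  shows "exp y \<le> 1 + y + y\<^sup>2"
proof (cases "y \<ge> 0")
  case True
  then show ?thesis using exp_bound assms by auto
next
  case False
  define a where "a = - y"
  have a: "a > 0" using False a_def by auto
  define q where "q = 1 - a + a\<^sup>2"
  have q: "q > 0"
  proof -
    have "q = (a - 1/2)\<^sup>2 + 3/4" unfolding q_def by (simp add: power2_eq_square algebra_simps)
    then show ?thesis by (simp add: add_nonneg_pos)
  qed
  have "2 \<le> 2 + a\<^sup>2 + a^3 + a^4" using a by simp
  also have "\<dots> = q * (2 + 2 * a + a\<^sup>2)"
    unfolding q_def by (simp add: power2_eq_square power3_eq_cube power4_eq_xxxx algebra_simps)
  also have "\<dots> \<le> q * (2 * exp a)"
    using exp_lower_Taylor_quadratic[of a] a q by (intro mult_left_mono) auto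
  finally have "1 / exp a \<le> q" by (simp add: divide_le_eq mult.commute)
  then show ?thesis by (simp add: a_def q_def exp_minus inverse_eq_divide)
qed

lemma exp_sum_le_sum_exp:
  fixes x y :: "nat \<Rightarrow> real"
  assumes "x \<in> simplex K"
  shows "exp (\<Sum>k<K. x k * y k) \<le> (\<Sum>k<K. x k * exp (y k))"
proof -
  have "{..<K} \<noteq> {}" using assms by (auto simp: simplex_def)
  then show ?thesis
    using convex_on_sum[OF finite_lessThan _ exp_convex, where a = x and y = y] assms
    by (auto simp: simplex_def)
qed

lemma sum_simplex_mult_abs_le_1:
  assumes "w \<in> simplex K" "\<forall>l<K. \<bar>f l\<bar> \<le> 1"
  shows "\<bar>\<Sum>l<K. w l * f l\<bar> \<le> 1"
proof -
  have "\<bar>\<Sum>l<K. w l * f l\<bar> \<le> (\<Sum>l<K. \<bar>w l * f l\<bar>)" by (rule sum_abs)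
  also have "\<dots> \<le> (\<Sum>l<K. w l)"
    using assms by (intro sum_mono) (auto simp: simplex_def abs_mult mult_left_le)
  also have "\<dots> = 1" using assms by (simp add: simplex_def)
  finally show ?thesis .
qed

lemma sum_if_const_card:
  fixes T :: nat
  shows "(\<Sum>t<T. if P t then (c::real) else 0) = c * real (card {t. t < T \<and> P t})"
proof -
  have "(\<Sum>t<T. if P t then c else 0) = (\<Sum>t\<in>{t \<in> {..<T}. P t}. c)"
    by (subst sum.inter_filter) auto
  also have "{t \<in> {..<T}. P t} = {t. t < T \<and> P t}" by auto
  finally show ?thesis by simp
qed

lemma card_first_occurrences_le:
  fixes Zs :: "nat \<Rightarrow> 'a"
  shows "card {t. t < T \<and> \<not> (\<exists>s<t. Zs s = Zs t)} \<le> card (Zs ` {..<T})"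
proof (rule card_inj_on_le)
  let ?F = "{t. t < T \<and> \<not> (\<exists>s<t. Zs s = Zs t)}"
  show "inj_on Zs ?F"
  proof (rule inj_onI)
    fix x y assume "x \<in> ?F" "y \<in> ?F" and "Zs x = Zs y"
    then show "x = y" by (cases x y rule: linorder_cases) auto
  qed
qed auto

lemma half_le_ln:
  fixes x :: real
  assumes "2 \<le> x"
  shows "1 / 2 \<le> ln x"
proof -
  have "exp (1 / 2 :: real) \<le> 1 + 1 / 2 + (1 / 2)\<^sup>2" by (rule exp_bound) auto
  also have "\<dots> \<le> x" using assms by (simp add: power2_eq_square)
  finally show ?thesis using assms by (subst ln_ge_iff) auto
qed

lemma sum_context_averages:
  fixes Zs :: "nat \<Rightarrow> 'z" and f :: "nat \<Rightarrow> real"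
  shows "(\<Sum>t<T. (\<Sum>s\<in>{s. s < T \<and> Zs s = Zs t}. f s) / real (card {s. s < T \<and> Zs s = Zs t}))
       = (\<Sum>s<T. f s)"
proof -
  define V where "V z = {s. s \<in> {..<T} \<and> Zs s = z}" for z
  define avg where "avg z = (\<Sum>s\<in>V z. f s) / real (card (V z))" for z
  have V: "{s. s < T \<and> Zs s = z} = V z" for z unfolding V_def by auto
  have "(\<Sum>t<T. avg (Zs t)) = (\<Sum>z\<in>Zs ` {..<T}. \<Sum>t\<in>V z. avg (Zs t))"
    unfolding V_def by (rule sum.group[symmetric]) auto
  also have "\<dots> = (\<Sum>z\<in>Zs ` {..<T}. real (card (V z)) * avg z)"
    by (intro sum.cong refl) (simp add: V_def)
  also have "\<dots> = (\<Sum>z\<in>Zs ` {..<T}. \<Sum>s\<in>V z. f s)"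
    unfolding avg_def by (intro sum.cong refl) (auto simp: V_def card_gt_0_iff)
  also have "\<dots> = (\<Sum>s<T. f s)"
    unfolding V_def by (rule sum.group) auto
  finally show ?thesis unfolding V avg_def .
qed

section \<open>Optimistic Hedge\<close>

definition exp_weight_sum :: "nat \<Rightarrow> real \<Rightarrow> (nat \<Rightarrow> real) \<Rightarrow> real" where
  "exp_weight_sum K eta v = (\<Sum>k<K. exp (- eta * v k))"

definition softmax :: "nat \<Rightarrow> real \<Rightarrow> (nat \<Rightarrow> real) \<Rightarrow> nat \<Rightarrow> real" where
  "softmax K eta v k = exp (- eta * v k) / exp_weight_sum K eta v"

text \<open>The potential of Hedge: a soft minimum of the cumulative losses v, normalized to vanish
  at v = 0.\<close>
definition softmin_potential :: "nat \<Rightarrow> real \<Rightarrow> (nat \<Rightarrow> real) \<Rightarrow> real" where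
  "softmin_potential K eta v = - ln (exp_weight_sum K eta v / real K) / eta"

lemma exp_weight_sum_pos: "K \<ge> 1 \<Longrightarrow> exp_weight_sum K eta v > 0"
  unfolding exp_weight_sum_def by (intro sum_pos) (auto simp: lessThan_empty_iff)

lemma softmax_in_simplex: "K \<ge> 1 \<Longrightarrow> softmax K eta v \<in> simplex K"
  using exp_weight_sum_pos[of K eta v]
  by (auto simp: simplex_def softmax_def exp_weight_sum_def simp flip: sum_divide_distrib)

lemma softmin_potential_zero: "K \<ge> 1 \<Longrightarrow> softmin_potential K eta (\<lambda>_. 0) = 0"
  unfolding softmin_potential_def exp_weight_sum_def by simp

lemma softmin_potential_le:
  assumes K: "K \<ge> 1" and eta: "eta > 0" and u: "u \<in> simplex K"
  shows "softmin_potential K eta v \<le> (\<Sum>l<K. u l * v l) + ln (real K) / eta"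
proof -
  have each: "softmin_potential K eta v \<le> v l + ln (real K) / eta" if l: "l < K" for l
  proof -
    have "exp (- eta * v l) \<le> exp_weight_sum K eta v"
      unfolding exp_weight_sum_def using l by (intro member_le_sum) auto
    then have "- eta * v l - ln (real K) \<le> ln (exp_weight_sum K eta v / real K)"
      using exp_weight_sum_pos[OF K, of eta v] K by (simp add: ln_ge_iff ln_div)
    then have "- ln (exp_weight_sum K eta v / real K) / eta \<le> (eta * v l + ln (real K)) / eta"
      using eta by (intro divide_right_mono) auto
    then show ?thesis using eta unfolding softmin_potential_def by (simp add: add_divide_distrib)
  qed
  have "softmin_potential K eta v = (\<Sum>l<K. u l * softmin_potential K eta v)"
    using u by (simp add: simplex_def flip: sum_distrib_right)
  also have "\<dots> \<le> (\<Sum>l<K. u l * (v l + ln (real K) / eta))"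
    using u each by (intro sum_mono mult_left_mono) (auto simp: simplex_def)
  also have "\<dots> = (\<Sum>l<K. u l * v l) + (\<Sum>l<K. u l) * (ln (real K) / eta)"
    unfolding distrib_left sum.distrib sum_distrib_right ..
  also have "\<dots> = (\<Sum>l<K. u l * v l) + ln (real K) / eta"
    using u by (simp add: simplex_def)
  finally show ?thesis .
qed

lemma exp_weight_sum_ratio:
  assumes "K \<ge> 1"
  shows "exp_weight_sum K eta (\<lambda>k. L k + a k) / exp_weight_sum K eta (\<lambda>k. L k + m k)
       = (\<Sum>k<K. softmax K eta (\<lambda>k. L k + m k) k * exp (- eta * (a k - m k)))"
  unfolding exp_weight_sum_def softmax_def sum_divide_distrib
proof (intro sum.cong refl)
  fix k
  have "exp (- eta * (L k + a k)) = exp (- eta * (L k + m k)) * exp (- eta * (a k - m k))"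
    by (simp add: algebra_simps flip: exp_add)
  then show "exp (- eta * (L k + a k)) / (\<Sum>k<K. exp (- eta * (L k + m k))) =
      exp (- eta * (L k + m k)) / (\<Sum>k<K. exp (- eta * (L k + m k))) * exp (- eta * (a k - m k))"
    by simp
qed

lemma ln_exp_weight_ratio_le:
  assumes K: "K \<ge> 1" and eta: "eta > 0"
    and D: "\<forall>k<K. \<bar>l k - m k\<bar> \<le> D" and eD: "eta * D \<le> 1"
  shows "ln (exp_weight_sum K eta (\<lambda>k. L k + l k) / exp_weight_sum K eta (\<lambda>k. L k + m k))
       \<le> - eta * (\<Sum>k<K. softmax K eta (\<lambda>k. L k + m k) k * (l k - m k)) + eta\<^sup>2 * D\<^sup>2"
proof -
  define x where "x = softmax K eta (\<lambda>k. L k + m k)"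
  have x: "x \<in> simplex K" unfolding x_def by (rule softmax_in_simplex[OF K])
  have "(\<Sum>k<K. x k * exp (- eta * (l k - m k)))
      \<le> (\<Sum>k<K. x k * (1 + (- eta * (l k - m k)) + eta\<^sup>2 * D\<^sup>2))"
  proof (intro sum_mono mult_left_mono)
    fix k assume k: "k \<in> {..<K}"
    have a: "\<bar>eta * (l k - m k)\<bar> \<le> eta * D" using D k eta by (simp add: abs_mult)
    have "(- eta * (l k - m k))\<^sup>2 = \<bar>eta * (l k - m k)\<bar>\<^sup>2" by simp
    also have "\<dots> \<le> (eta * D)\<^sup>2" using a by (intro power_mono) auto
    finally have sq: "(- eta * (l k - m k))\<^sup>2 \<le> (eta * D)\<^sup>2" .
    have "exp (- eta * (l k - m k)) \<le> 1 + (- eta * (l k - m k)) + (- eta * (l k - m k))\<^sup>2"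
      using a eD by (intro exp_le_one_plus_self_plus_square) linarith
    then show "exp (- eta * (l k - m k)) \<le> 1 + (- eta * (l k - m k)) + eta\<^sup>2 * D\<^sup>2"
      using sq by (simp add: power_mult_distrib)
    show "0 \<le> x k" using x k by (simp add: simplex_def)
  qed
  also have "\<dots> = (\<Sum>k<K. x k) - eta * (\<Sum>k<K. x k * (l k - m k)) + eta\<^sup>2 * D\<^sup>2 * (\<Sum>k<K. x k)"
    by (simp add: algebra_simps sum.distrib sum_distrib_left sum_distrib_right sum_subtractf)
  also have "\<dots> = 1 - eta * (\<Sum>k<K. x k * (l k - m k)) + eta\<^sup>2 * D\<^sup>2"
    using x by (simp add: simplex_def)
  finally have "exp_weight_sum K eta (\<lambda>k. L k + l k) / exp_weight_sum K eta (\<lambda>k. L k + m k)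
      \<le> 1 - eta * (\<Sum>k<K. x k * (l k - m k)) + eta\<^sup>2 * D\<^sup>2"
    unfolding exp_weight_sum_ratio[OF K] x_def .
  moreover have "ln (exp_weight_sum K eta (\<lambda>k. L k + l k) / exp_weight_sum K eta (\<lambda>k. L k + m k))
      \<le> exp_weight_sum K eta (\<lambda>k. L k + l k) / exp_weight_sum K eta (\<lambda>k. L k + m k) - 1"
    using exp_weight_sum_pos[OF K] by (intro ln_le_minus_one) auto
  ultimately show ?thesis unfolding x_def by linarith
qed

lemma ln_exp_weight_ratio_ge:
  assumes K: "K \<ge> 1"
  shows "eta * (\<Sum>k<K. softmax K eta (\<lambda>k. L k + m k) k * m k)
       \<le> ln (exp_weight_sum K eta L / exp_weight_sum K eta (\<lambda>k. L k + m k))"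
proof -
  have "exp (\<Sum>k<K. softmax K eta (\<lambda>k. L k + m k) k * (eta * m k))
      \<le> exp_weight_sum K eta (\<lambda>k. L k + 0) / exp_weight_sum K eta (\<lambda>k. L k + m k)"
    unfolding exp_weight_sum_ratio[OF K]
    using exp_sum_le_sum_exp[OF softmax_in_simplex[OF K]] by simp
  then show ?thesis
    using exp_weight_sum_pos[OF K] by (simp add: ln_ge_iff sum_distrib_left algebra_simps)
qed

text \<open>L is the cumulative loss so far, m the hint and l the new loss.\<close>
lemma optimistic_hedge_step:
  assumes K: "K \<ge> 1" and eta: "eta > 0"
    and D: "\<forall>k<K. \<bar>l k - m k\<bar> \<le> D" and eD: "eta * D \<le> 1"
  shows "(\<Sum>k<K. softmax K eta (\<lambda>k. L k + m k) k * l k)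
       + softmin_potential K eta L - softmin_potential K eta (\<lambda>k. L k + l k) \<le> eta * D\<^sup>2"
proof -
  define x where "x = softmax K eta (\<lambda>k. L k + m k)"
  define S where "S = exp_weight_sum K eta (\<lambda>k. L k + m k)"
  have S: "S > 0" "exp_weight_sum K eta L > 0" "exp_weight_sum K eta (\<lambda>k. L k + l k) > 0"
    unfolding S_def using exp_weight_sum_pos[OF K] by auto
  have "softmin_potential K eta L - softmin_potential K eta (\<lambda>k. L k + l k)
      = (ln (exp_weight_sum K eta (\<lambda>k. L k + l k) / S) - ln (exp_weight_sum K eta L / S)) / eta"
    using S K unfolding softmin_potential_def by (simp add: ln_div diff_divide_distrib)
  also have "\<dots> \<le> (- eta * (\<Sum>k<K. x k * (l k - m k)) + eta\<^sup>2 * D\<^sup>2 - eta * (\<Sum>k<K. x k * m k)) / eta"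
    using ln_exp_weight_ratio_le[OF K eta D eD, of L] ln_exp_weight_ratio_ge[OF K, of eta L m] eta
    unfolding x_def S_def by (intro divide_right_mono) auto
  also have "\<dots> = eta * D\<^sup>2 - (\<Sum>k<K. x k * l k)"
    using eta by (simp add: field_simps power2_eq_square sum_subtractf)
  finally show ?thesis unfolding x_def by simp
qed

lemma softmax_le_shift:
  assumes K: "K \<ge> 1" and eta: "eta \<ge> 0" and k: "k < K"
    and vB: "\<forall>k<K. \<bar>v k - v' k\<bar> \<le> B"
  shows "softmax K eta v k \<le> exp (2 * eta * B) * softmax K eta v' k"
proof -
  have shift: "exp (- eta * u k) \<le> exp (eta * B) * exp (- eta * u' k)"
    if "\<bar>u k - u' k\<bar> \<le> B" for u u' k
  proof -
    have "eta * (u' k - u k) \<le> eta * B" using that eta by (intro mult_left_mono) auto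
    then show ?thesis by (simp add: algebra_simps flip: exp_add)
  qed
  have "exp_weight_sum K eta v' \<le> exp (eta * B) * exp_weight_sum K eta v"
    unfolding exp_weight_sum_def sum_distrib_left
    using vB shift[of v' _ v] by (intro sum_mono) (auto simp: abs_minus_commute)
  then have "exp_weight_sum K eta v' / exp (eta * B) \<le> exp_weight_sum K eta v"
    by (simp add: divide_le_eq mult.commute)
  then have "exp (eta * B) * exp (- eta * v' k) / exp_weight_sum K eta v
      \<le> exp (eta * B) * exp (- eta * v' k) / (exp_weight_sum K eta v' / exp (eta * B))"
    using exp_weight_sum_pos[OF K] by (intro divide_left_mono) auto
  moreover have "softmax K eta v k \<le> exp (eta * B) * exp (- eta * v' k) / exp_weight_sum K eta v"
    unfolding softmax_def using shift[of v k v'] vB k exp_weight_sum_pos[OF K, THEN less_imp_le]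
    by (intro divide_right_mono) auto
  ultimately show ?thesis
    unfolding softmax_def by (simp add: field_simps flip: exp_add)
qed

lemma softmax_l1_stable:
  assumes K: "K \<ge> 1" and eta: "eta \<ge> 0" and vB: "\<forall>k<K. \<bar>v k - v' k\<bar> \<le> B"
    and small: "4 * eta * B \<le> 1"
  shows "(\<Sum>k<K. \<bar>softmax K eta v k - softmax K eta v' k\<bar>) \<le> 8 * eta * B"
proof -
  define E where "E = exp (2 * eta * B)"
  have "\<bar>v 0 - v' 0\<bar> \<le> B" using vB K by auto
  then have B: "B \<ge> 0" by (meson abs_ge_zero order_trans)
  have "E \<le> 1 + 2 * eta * B + (2 * eta * B)\<^sup>2"
    unfolding E_def using exp_bound[of "2 * eta * B"] B eta small by auto
  moreover have "(2 * eta * B)\<^sup>2 \<le> 2 * eta * B"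
    unfolding power2_eq_square using B eta small by (intro mult_left_le) auto
  ultimately have E: "1 \<le> E" "E \<le> 1 + 4 * eta * B" using B eta unfolding E_def by auto
  have "(\<Sum>k<K. \<bar>softmax K eta v k - softmax K eta v' k\<bar>) \<le> (\<Sum>k<K. (E - 1) * E * softmax K eta v' k)"
  proof (intro sum_mono)
    fix k assume "k \<in> {..<K}"
    then have k: "k < K" by simp
    define p q where "p = softmax K eta v k" and "q = softmax K eta v' k"
    have a: "p \<le> E * q"
      unfolding E_def p_def q_def using softmax_le_shift[OF K eta k vB] .
    have b: "q \<le> E * p"
      unfolding E_def p_def q_def using softmax_le_shift[OF K eta k, of v' v B] vB
      by (simp add: abs_minus_commute)
    have q: "q \<ge> 0" unfolding q_def using softmax_in_simplex[OF K] k by (auto simp: simplex_def)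
    have "p - q \<le> (E - 1) * q" using a by (simp add: algebra_simps)
    also have "\<dots> \<le> (E - 1) * E * q"
      unfolding mult.assoc using E q by (intro mult_left_mono) (auto simp: mult_le_cancel_right1)
    finally have up: "p - q \<le> (E - 1) * E * q" .
    have "q - p \<le> (E - 1) * p" using b by (simp add: algebra_simps)
    also have "\<dots> \<le> (E - 1) * (E * q)" using a E by (intro mult_left_mono) auto
    finally have down: "q - p \<le> (E - 1) * E * q" by (simp add: mult.assoc)
    show "\<bar>p - q\<bar> \<le> (E - 1) * E * q" using up down by (simp add: abs_le_iff)
  qed
  also have "\<dots> = (E - 1) * E"
    using softmax_in_simplex[OF K, of eta v'] by (simp add: simplex_def flip: sum_distrib_left)
  also have "\<dots> \<le> (4 * eta * B) * 2"
    using E B eta small by (intro mult_mono) auto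
  finally show ?thesis by simp
qed

section \<open>Product distributions\<close>

lemma sum_PiE_insert:
  assumes "finite I" "x \<notin> I"
  shows "(\<Sum>b\<in>PiE (insert x I) (\<lambda>_. A). F b) = (\<Sum>k\<in>A. \<Sum>b\<in>PiE I (\<lambda>_. A). F (b(x := k)))"
proof -
  have "(\<Sum>b\<in>PiE (insert x I) (\<lambda>_. A). F b) = (\<Sum>(k, b)\<in>A \<times> PiE I (\<lambda>_. A). F (b(x := k)))"
    unfolding PiE_insert_eq using inj_combinator[OF assms(2), of "\<lambda>_. A"]
    by (subst sum.reindex) (auto simp: case_prod_unfold)
  also have "\<dots> = (\<Sum>k\<in>A. \<Sum>b\<in>PiE I (\<lambda>_. A). F (b(x := k)))"
    by (subst sum.cartesian_product) simp
  finally show ?thesis .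
qed

lemma prod_fun_upd_insert:
  assumes "x \<notin> I" "finite I"
  shows "(\<Prod>i\<in>insert x I. p i ((b(x := k)) i)) = p x k * (\<Prod>i\<in>I. p i (b i))"
proof -
  have "(\<Prod>i\<in>I. p i ((b(x := k)) i)) = (\<Prod>i\<in>I. p i (b i))"
    using assms by (intro prod.cong) auto
  then show ?thesis using assms by simp
qed

lemma prod_simplex_nonneg:
  "\<forall>i\<in>I. p i \<in> simplex K \<Longrightarrow> b \<in> PiE I (\<lambda>_. {..<K}) \<Longrightarrow> (\<Prod>i\<in>I. p i (b i)) \<ge> 0"
  unfolding simplex_def by (intro prod_nonneg) (auto simp: PiE_iff)

lemma sum_PiE_prod_simplex:
  "finite I \<Longrightarrow> \<forall>i\<in>I. p i \<in> simplex K \<Longrightarrow> (\<Sum>b\<in>PiE I (\<lambda>_. {..<K}). \<Prod>i\<in>I. p i (b i)) = 1"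
  using prod_sum_PiE[of I "\<lambda>_. {..<K}" p] by (simp add: simplex_def)

lemma abs_product_expectation_le_1:
  assumes "finite I" "\<forall>i\<in>I. p i \<in> simplex K" "\<forall>b\<in>PiE I (\<lambda>_. {..<K}). \<bar>g b\<bar> \<le> 1"
  shows "\<bar>\<Sum>b\<in>PiE I (\<lambda>_. {..<K}). (\<Prod>i\<in>I. p i (b i)) * g b\<bar> \<le> 1"
proof -
  have "\<bar>\<Sum>b\<in>PiE I (\<lambda>_. {..<K}). (\<Prod>i\<in>I. p i (b i)) * g b\<bar>
      \<le> (\<Sum>b\<in>PiE I (\<lambda>_. {..<K}). \<bar>(\<Prod>i\<in>I. p i (b i)) * g b\<bar>)" by (rule sum_abs)
  also have "\<dots> \<le> (\<Sum>b\<in>PiE I (\<lambda>_. {..<K}). \<Prod>i\<in>I. p i (b i))"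
    using assms(3) prod_simplex_nonneg[OF assms(2)]
    by (intro sum_mono) (simp add: abs_mult mult_left_le)
  also have "\<dots> = 1" using sum_PiE_prod_simplex assms by blast
  finally show ?thesis .
qed

lemma abs_product_expectation_diff_le:
  assumes "finite I" "\<forall>i\<in>I. p i \<in> simplex K" "\<forall>i\<in>I. q i \<in> simplex K"
    and "\<forall>b\<in>PiE I (\<lambda>_. {..<K}). \<bar>g b\<bar> \<le> 1"
  shows "\<bar>\<Sum>b\<in>PiE I (\<lambda>_. {..<K}). ((\<Prod>i\<in>I. p i (b i)) - (\<Prod>i\<in>I. q i (b i))) * g b\<bar>
       \<le> (\<Sum>i\<in>I. \<Sum>k<K. \<bar>p i k - q i k\<bar>)"
  using assms
proof (induction I arbitrary: g rule: finite_induct)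
  case empty
  then show ?case by simp
next
  case (insert x I)
  define B where "B = PiE I (\<lambda>_. {..<K})"
  define P where "P b = (\<Prod>i\<in>I. p i (b i))" for b
  define Q where "Q b = (\<Prod>i\<in>I. q i (b i))" for b
  have p: "\<forall>i\<in>I. p i \<in> simplex K" "p x \<in> simplex K"
    and q: "\<forall>i\<in>I. q i \<in> simplex K" "q x \<in> simplex K" using insert.prems by auto
  have g: "\<forall>b\<in>B. \<bar>g (b(x := k))\<bar> \<le> 1" if "k < K" for k
    using insert.prems(3) that PiE_fun_upd[of k "\<lambda>_. {..<K}" x] unfolding B_def by auto
  have "(\<Sum>b\<in>PiE (insert x I) (\<lambda>_. {..<K}).
          ((\<Prod>i\<in>insert x I. p i (b i)) - (\<Prod>i\<in>insert x I. q i (b i))) * g b)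
      = (\<Sum>k<K. \<Sum>b\<in>B. (p x k * P b - q x k * Q b) * g (b(x := k)))"
    unfolding sum_PiE_insert[OF insert.hyps] prod_fun_upd_insert[OF insert.hyps(2,1)] P_def Q_def B_def ..
  also have "\<dots> = (\<Sum>k<K. (p x k - q x k) * (\<Sum>b\<in>B. P b * g (b(x := k))))
      + (\<Sum>k<K. q x k * (\<Sum>b\<in>B. (P b - Q b) * g (b(x := k))))"
    by (simp add: algebra_simps sum_distrib_left flip: sum.distrib)
  finally have split: "(\<Sum>b\<in>PiE (insert x I) (\<lambda>_. {..<K}).
          ((\<Prod>i\<in>insert x I. p i (b i)) - (\<Prod>i\<in>insert x I. q i (b i))) * g b)
      = (\<Sum>k<K. (p x k - q x k) * (\<Sum>b\<in>B. P b * g (b(x := k))))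
      + (\<Sum>k<K. q x k * (\<Sum>b\<in>B. (P b - Q b) * g (b(x := k))))" .
  define S where "S = (\<Sum>i\<in>I. \<Sum>k<K. \<bar>p i k - q i k\<bar>)"
  have "\<bar>\<Sum>k<K. (p x k - q x k) * (\<Sum>b\<in>B. P b * g (b(x := k)))\<bar>
      \<le> (\<Sum>k<K. \<bar>(p x k - q x k) * (\<Sum>b\<in>B. P b * g (b(x := k)))\<bar>)" by (rule sum_abs)
  also have "\<dots> \<le> (\<Sum>k<K. \<bar>p x k - q x k\<bar>)"
  proof (intro sum_mono)
    fix k assume "k \<in> {..<K}"
    then have "\<bar>\<Sum>b\<in>B. P b * g (b(x := k))\<bar> \<le> 1"
      using abs_product_expectation_le_1[OF insert.hyps(1) p(1)] g unfolding P_def B_def by auto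
    then show "\<bar>(p x k - q x k) * (\<Sum>b\<in>B. P b * g (b(x := k)))\<bar> \<le> \<bar>p x k - q x k\<bar>"
      by (simp add: abs_mult mult_left_le)
  qed
  finally have t1: "\<bar>\<Sum>k<K. (p x k - q x k) * (\<Sum>b\<in>B. P b * g (b(x := k)))\<bar>
      \<le> (\<Sum>k<K. \<bar>p x k - q x k\<bar>)" .
  have "\<bar>\<Sum>k<K. q x k * (\<Sum>b\<in>B. (P b - Q b) * g (b(x := k)))\<bar>
      \<le> (\<Sum>k<K. \<bar>q x k * (\<Sum>b\<in>B. (P b - Q b) * g (b(x := k)))\<bar>)" by (rule sum_abs)
  also have "\<dots> \<le> (\<Sum>k<K. q x k * S)"
  proof (intro sum_mono)
    fix k assume k: "k \<in> {..<K}"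
    have "\<bar>\<Sum>b\<in>B. (P b - Q b) * g (b(x := k))\<bar> \<le> S"
      using insert.IH[OF p(1) q(1)] g k unfolding P_def Q_def S_def B_def by auto
    moreover have "q x k \<ge> 0" using q(2) k by (auto simp: simplex_def)
    ultimately show "\<bar>q x k * (\<Sum>b\<in>B. (P b - Q b) * g (b(x := k)))\<bar> \<le> q x k * S"
      by (simp add: abs_mult mult_left_mono)
  qed
  also have "\<dots> = S" using q(2) by (simp add: simplex_def flip: sum_distrib_right)
  finally have t2: "\<bar>\<Sum>k<K. q x k * (\<Sum>b\<in>B. (P b - Q b) * g (b(x := k)))\<bar> \<le> S" .
  show ?case unfolding split using t1 t2 insert.hyps by (simp add: S_def)
qed

lemma fun_upd_in_profiles:
  "b \<in> others J K j \<Longrightarrow> j < J \<Longrightarrow> l < K \<Longrightarrow> b(j := l) \<in> profiles J K"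
  unfolding others_def profiles_def
  using PiE_fun_upd[of l "\<lambda>_. {..<K}" j b "{..<J} - {j}"] by (simp add: insert_absorb)

lemma sum_profiles_split_agent:
  fixes w :: "nat \<Rightarrow> nat \<Rightarrow> 'a::comm_semiring_1"
  assumes "j < J"
  shows "(\<Sum>a\<in>profiles J K. (\<Prod>i<J. w i (a i)) * g a)
       = (\<Sum>l<K. w j l * (\<Sum>b\<in>others J K j. (\<Prod>i\<in>{..<J} - {j}. w i (b i)) * g (b(j := l))))"
proof -
  have J: "{..<J} = insert j ({..<J} - {j})" using assms by auto
  have fin: "finite ({..<J} - {j})" and j: "j \<notin> {..<J} - {j}" by auto
  have "(\<Sum>a\<in>profiles J K. (\<Prod>i<J. w i (a i)) * g a)
      = (\<Sum>a\<in>PiE (insert j ({..<J} - {j})) (\<lambda>_. {..<K}).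
           (\<Prod>i\<in>insert j ({..<J} - {j}). w i (a i)) * g a)"
    unfolding profiles_def using J by simp
  also have "\<dots> = (\<Sum>l<K. \<Sum>b\<in>others J K j. (w j l * (\<Prod>i\<in>{..<J} - {j}. w i (b i))) * g (b(j := l)))"
    unfolding others_def sum_PiE_insert[OF fin j] prod_fun_upd_insert[OF j fin] ..
  also have "\<dots> = (\<Sum>l<K. w j l * (\<Sum>b\<in>others J K j. (\<Prod>i\<in>{..<J} - {j}. w i (b i)) * g (b(j := l))))"
    by (simp only: sum_distrib_left mult.assoc)
  finally show ?thesis .
qed

lemma ip_Phi:
  "ip d (Phi J K phi W j k) z =
     (\<Sum>b\<in>others J K j. (\<Prod>i\<in>{..<J} - {j}. W i (b i)) * ip d (phi j (b(j := k))) z)"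
  unfolding Phi_def ip_def sum_distrib_right
  by (subst sum.swap) (simp add: mult.assoc sum_distrib_left)

section \<open>Tuning the learning rate\<close>

lemma powr_quarter_power:
  fixes x :: real
  assumes "x > 0"
  shows "(x powr (1/4)) ^ n = x powr (real n / 4)"
  using assms by (simp add: powr_realpow[symmetric] powr_powr)

lemma tuned_learning_rate:
  fixes J T X eta :: real
  assumes J: "J > 0" and T: "T > 0" and X: "X > 0"
    and eta: "eta = J powr (-1/2) * T powr (-1/4) * X powr (1/4)"
  shows "eta > 0" and "eta ^ 4 * J\<^sup>2 * T = X"
    and "T * (X powr (3/4) * T powr (-3/4) * J powr (1/2)) = X / eta"
proof -
  define a b c where "a = J powr (1/4)" and "b = T powr (1/4)" and "c = X powr (1/4)"
  have abc: "a > 0" "b > 0" "c > 0" unfolding a_def b_def c_def using assms by auto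
  have roots: "J = a ^ 4" "T = b ^ 4" "X = c ^ 4"
    unfolding a_def b_def c_def using assms by (simp_all add: powr_quarter_power)
  have p: "J powr (1/2) = a\<^sup>2" "J powr (-1/2) = 1 / a\<^sup>2" "T powr (-1/4) = 1 / b"
    "T powr (-3/4) = 1 / b ^ 3" "X powr (3/4) = c ^ 3"
    unfolding a_def b_def c_def using assms
    by (simp_all add: powr_quarter_power powr_minus_divide)
  have eta_abc: "eta = c / (a\<^sup>2 * b)"
    unfolding eta p(2,3) c_def[symmetric] by simp
  then show "eta > 0" using abc by simp
  show "eta ^ 4 * J\<^sup>2 * T = X"
    unfolding eta_abc roots using abc by (simp add: field_simps eval_nat_numeral)
  show "T * (X powr (3/4) * T powr (-3/4) * J powr (1/2)) = X / eta"
    unfolding p(1,4,5) eta_abc using abc by (simp add: roots field_simps eval_nat_numeral)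
qed

lemma tuned_regret_terms_le:
  fixes eta J T X lnK L m m' Lc S :: real
  assumes eta: "eta > 0" and J: "J \<ge> 1" and small: "576 * eta\<^sup>2 * J \<le> 1"
    and rate: "eta ^ 4 * J\<^sup>2 * T = X"
    and X: "X = lnK * (L + m)" and lnK: "lnK \<ge> 1/2" and L: "L \<ge> 0" and m: "m \<ge> 1"
    and m': "m' \<le> m" and Lc: "Lc \<le> L" and S: "S \<le> J * L" and TL: "J\<^sup>2 * L \<le> T"
  shows "2 * Lc + m' * lnK / eta + eta * (T * (24 * eta * J)\<^sup>2 + 4 * (m' + 2 * S))
    \<le> 583 * (X / eta)"
proof -
  define E where "E = X / eta"
  have X2: "L + m \<le> 2 * X"
    using mult_right_mono[OF lnK, of "L + m"] L m unfolding X by simp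
  then have E: "E > 0" unfolding E_def using eta L m by simp
  have XE: "X = eta * E" unfolding E_def using eta by simp
  have E3: "eta ^ 3 * J\<^sup>2 * T = E"
    unfolding E_def rate[symmetric] using eta by (simp add: field_simps eval_nat_numeral)
  have eta2: "eta\<^sup>2 \<le> 1 / 576"
    using small mult_left_mono[OF J, of "576 * eta\<^sup>2"] by simp
  have "lnK * m' \<le> lnK * m" "0 \<le> lnK * L" using m' lnK L by (auto intro: mult_left_mono)
  then have "m' * lnK \<le> X" unfolding X by (simp add: algebra_simps)
  then have t1: "m' * lnK / eta \<le> E" unfolding E_def using eta by (simp add: divide_right_mono)
  have t2: "eta * (T * (24 * eta * J)\<^sup>2) = 576 * E"
    unfolding E3[symmetric] by (simp add: power2_eq_square power3_eq_cube)
  have "eta * (4 * m') \<le> eta * (8 * X)" using m' L X2 eta by simp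
  also have "\<dots> = 8 * eta\<^sup>2 * E" unfolding XE by (simp add: power2_eq_square)
  also have "\<dots> \<le> E" using eta2 E by simp
  finally have t3: "eta * (4 * m') \<le> E" .
  have "J * L \<le> J * (2 * X)" using J X2 m by (intro mult_left_mono) auto
  then have "eta * (8 * S) \<le> eta * (8 * (J * (2 * X)))" using S eta by simp
  also have "\<dots> = 16 * (eta\<^sup>2 * J) * E" unfolding XE by (simp add: power2_eq_square)
  also have "\<dots> \<le> E" using small E by simp
  finally have t4: "eta * (8 * S) \<le> E" .
  have X3: "(L / 2) ^ 3 \<le> X ^ 3" using X2 L m by (intro power_mono) auto
  have "(L / 2) ^ 4 = (L / 2) ^ 3 * (L / 2)" by (simp add: eval_nat_numeral)
  also have "\<dots> \<le> X ^ 3 * (L / 2)" using X3 L by (intro mult_right_mono) auto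
  also have "\<dots> \<le> X ^ 3 * L" using X2 L m by (intro mult_left_mono) auto
  also have "\<dots> \<le> X ^ 3 * (J\<^sup>2 * J\<^sup>2 * L)"
  proof -
    have "1 \<le> J\<^sup>2" using J by (simp add: one_le_power)
    then have "1 * 1 \<le> J\<^sup>2 * J\<^sup>2" by (intro mult_mono) auto
    then have "1 * L \<le> J\<^sup>2 * J\<^sup>2 * L" using L by (intro mult_right_mono) auto
    then show ?thesis using X2 L m by (intro mult_left_mono) auto
  qed
  also have "\<dots> = X ^ 3 * J\<^sup>2 * (J\<^sup>2 * L)" by (simp add: mult_ac)
  also have "\<dots> \<le> X ^ 3 * J\<^sup>2 * T" using TL X2 L m by (intro mult_left_mono) auto
  also have "\<dots> = (X / eta) ^ 3 * (eta ^ 3 * J\<^sup>2 * T)" using eta by (simp add: power_divide)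
  also have "\<dots> = E ^ 4" unfolding E3 by (simp add: E_def eval_nat_numeral)
  finally have "L / 2 \<le> E" using E L by simp
  then have t5: "2 * Lc \<le> 4 * E" using Lc by simp
  have "eta * (T * (24 * eta * J)\<^sup>2 + 4 * (m' + 2 * S))
      = eta * (T * (24 * eta * J)\<^sup>2) + eta * (4 * m') + eta * (8 * S)" by (simp add: algebra_simps)
  then show ?thesis using t1 t2 t3 t4 t5 unfolding E_def by linarith
qed

lemma tuned_trivial_bound_le:
  fixes eta J T X :: real
  assumes eta: "eta > 0" and J: "J \<ge> 1" and T: "T \<ge> 0" and large: "1 < 576 * eta\<^sup>2 * J"
    and rate: "eta ^ 4 * J\<^sup>2 * T = X"
  shows "2 * T \<le> 30000 * (X / eta)"
proof -
  have "(1 / 576) ^ 3 < (eta\<^sup>2 * J) ^ 3" using large by (intro power_strict_mono) auto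
  also have "\<dots> = (eta\<^sup>2 * J) ^ 3 * 1" by simp
  also have "\<dots> \<le> (eta\<^sup>2 * J) ^ 3 * J" using J eta by (intro mult_left_mono) auto
  also have "\<dots> = (eta ^ 3 * J\<^sup>2)\<^sup>2" by (simp add: eval_nat_numeral mult_ac)
  finally have "(1 / 13824)\<^sup>2 < (eta ^ 3 * J\<^sup>2)\<^sup>2" by (simp add: power2_eq_square power3_eq_cube)
  then have "1 / 13824 < eta ^ 3 * J\<^sup>2"
    by (rule power_less_imp_less_base) (use eta J in auto)
  then have "2 \<le> 30000 * (eta ^ 3 * J\<^sup>2)" by linarith
  then have "2 * T \<le> 30000 * (eta ^ 3 * J\<^sup>2) * T" using T by (intro mult_right_mono) auto
  also have "\<dots> = 30000 * (X / eta)"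
    unfolding rate[symmetric] using eta by (simp add: eval_nat_numeral)
  finally show ?thesis .
qed

section \<open>Regret of POMWU\<close>

locale pomwu_run =
  fixes J K d :: nat and phi :: "nat \<Rightarrow> (nat \<Rightarrow> nat) \<Rightarrow> nat \<Rightarrow> real"
    and Zs :: "nat \<Rightarrow> nat \<Rightarrow> real" and preds :: "nat \<Rightarrow> nat \<Rightarrow> nat \<Rightarrow> real"
    and eta :: real and T :: nat
  assumes K_pos: "K \<ge> 1"
    and cost_bounded: "\<forall>j<J. \<forall>a\<in>profiles J K. \<forall>t<T. \<bar>ip d (phi j a) (Zs t)\<bar> \<le> 1"
begin

definition "state t = pomwu_state J K d phi Zs preds eta t"
definition "play t i = pomwu_play J K d phi Zs preds eta t i"
definition "loss t j l = ip d (Phi J K phi (play t) j l) (Zs t)"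
definition "cum_loss j z t l = (\<Sum>s<t. if Zs s = z then loss s j l else 0)"
definition "last_visit z t = Max {s. s < t \<and> Zs s = z}"
definition "hint j z t l = ip d (snd (state t) j z l) z"
definition "hinted_loss j z t l = cum_loss j z t l + hint j z t l"

text \<open>The strategy agent j would have played in round t had its prediction been correct.\<close>
definition "clairvoyant_play t j = softmax K eta (hinted_loss j (Zs t) t)"

lemma play_state: "play t = (\<lambda>j. mwu_play K d eta (fst (state t) j) (snd (state t) j) (preds j t))"
  by (auto simp: play_def pomwu_play_def state_def Let_def)

lemma cum_loss_Suc: "cum_loss j z (Suc t) l = cum_loss j z t l + (if Zs t = z then loss t j l else 0)"
  unfolding cum_loss_def by simp

lemma fst_state: "fst (state t) j z l = exp (- eta * cum_loss j z t l) / real K"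
proof (induction t)
  case 0
  then show ?case by (simp add: state_def cum_loss_def)
next
  case (Suc t)
  then show ?case
    by (auto simp: state_def Let_def loss_def cum_loss_Suc algebra_simps
        simp flip: play_state[unfolded state_def] exp_add)
qed

lemma le_last_visit: "s < t \<Longrightarrow> Zs s = z \<Longrightarrow> s \<le> last_visit z t"
  unfolding last_visit_def by (intro Max_ge) auto

lemma last_visit:
  assumes "\<exists>s<t. Zs s = z"
  shows "last_visit z t < t" "Zs (last_visit z t) = z"
    and "\<And>s. last_visit z t < s \<Longrightarrow> s < t \<Longrightarrow> Zs s \<noteq> z"
proof -
  have fin: "finite {s. s < t \<and> Zs s = z}" by simp
  have "last_visit z t \<in> {s. s < t \<and> Zs s = z}"
    unfolding last_visit_def using Max_in[OF fin] assms by auto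
  then show "last_visit z t < t" "Zs (last_visit z t) = z" by auto
  show "Zs s \<noteq> z" if "last_visit z t < s" "s < t" for s
    using that le_last_visit[of s t z] by linarith
qed

lemma last_visit_Suc: "last_visit (Zs t) (Suc t) = t"
  unfolding last_visit_def by (rule Max_eqI) auto

lemma snd_state:
  "snd (state t) j z = (if \<exists>s<t. Zs s = z then Phi J K phi (play (last_visit z t)) j else (\<lambda>l _. 0))"
proof (induction t)
  case 0
  then show ?case by (simp add: state_def)
next
  case (Suc t)
  have step: "snd (state (Suc t)) j z = (if z = Zs t then Phi J K phi (play t) j else snd (state t) j z)"
    by (auto simp: state_def Let_def play_state[unfolded state_def])
  show ?case
  proof (cases "z = Zs t")
    case True
    then show ?thesis using last_visit_Suc[of t] step by auto
  next
    case False
    then have "{s. s < Suc t \<and> Zs s = z} = {s. s < t \<and> Zs s = z}" using less_Suc_eq by auto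
    then have "(\<exists>s<Suc t. Zs s = z) = (\<exists>s<t. Zs s = z)" "last_visit z (Suc t) = last_visit z t"
      unfolding last_visit_def by auto
    then show ?thesis using Suc False step by auto
  qed
qed

lemma hint_eq: "hint j z t l = (if \<exists>s<t. Zs s = z then loss (last_visit z t) j l else 0)"
  using last_visit(2)[of t z] unfolding hint_def loss_def snd_state by (auto simp: ip_def)

lemma play_eq_softmax: "play t j = softmax K eta (hinted_loss j (preds j t) t)"
proof
  fix l
  have "fst (state t) j (preds j t) k * exp (- eta * ip d (snd (state t) j (preds j t) k) (preds j t))
      = exp (- eta * hinted_loss j (preds j t) t k) / real K" for k
    unfolding fst_state hinted_loss_def hint_def by (simp add: algebra_simps flip: exp_add)
  then show "play t j l = softmax K eta (hinted_loss j (preds j t) t) l"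
    unfolding play_state mwu_play_def softmax_def exp_weight_sum_def using K_pos
    by (simp flip: sum_divide_distrib)
qed

lemma play_in_simplex: "play t j \<in> simplex K"
  unfolding play_eq_softmax using softmax_in_simplex[OF K_pos] .

lemma clairvoyant_play_in_simplex: "clairvoyant_play t j \<in> simplex K"
  unfolding clairvoyant_play_def using softmax_in_simplex[OF K_pos] .

lemma play_eq_clairvoyant: "preds j t = Zs t \<Longrightarrow> play t j = clairvoyant_play t j"
  unfolding play_eq_softmax clairvoyant_play_def by simp

lemma loss_eq:
  "loss t j l = (\<Sum>b\<in>others J K j. (\<Prod>i\<in>{..<J} - {j}. play t i (b i)) * ip d (phi j (b(j := l))) (Zs t))"
  unfolding loss_def ip_Phi ..

lemma abs_cost_others_le_1:
  "t < T \<Longrightarrow> j < J \<Longrightarrow> l < K \<Longrightarrow>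
    \<forall>b\<in>PiE ({..<J} - {j}) (\<lambda>_. {..<K}). \<bar>ip d (phi j (b(j := l))) (Zs t)\<bar> \<le> 1"
  using cost_bounded fun_upd_in_profiles[of _ J K j l] unfolding others_def by auto

lemma abs_loss_le_1: "t < T \<Longrightarrow> j < J \<Longrightarrow> l < K \<Longrightarrow> \<bar>loss t j l\<bar> \<le> 1"
  unfolding loss_eq others_def using play_in_simplex
  by (intro abs_product_expectation_le_1 abs_cost_others_le_1) auto

lemma abs_loss_diff_le:
  assumes "t < T" "s < T" "j < J" "l < K" "Zs s = Zs t"
  shows "\<bar>loss t j l - loss s j l\<bar> \<le> (\<Sum>i\<in>{..<J} - {j}. \<Sum>k<K. \<bar>play t i k - play s i k\<bar>)"
proof -
  have "loss t j l - loss s j l = (\<Sum>b\<in>PiE ({..<J} - {j}) (\<lambda>_. {..<K}).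
      ((\<Prod>i\<in>{..<J} - {j}. play t i (b i)) - (\<Prod>i\<in>{..<J} - {j}. play s i (b i)))
        * ip d (phi j (b(j := l))) (Zs t))"
    unfolding loss_eq others_def assms(5) by (simp only: sum_subtractf[symmetric] left_diff_distrib)
  then show ?thesis
    using play_in_simplex assms
    by (simp only:) (intro abs_product_expectation_diff_le abs_cost_others_le_1, auto)
qed

lemma abs_hint_le_1: "t \<le> T \<Longrightarrow> j < J \<Longrightarrow> l < K \<Longrightarrow> \<bar>hint j z t l\<bar> \<le> 1"
  using last_visit(1)[of t z] abs_loss_le_1[of "last_visit z t" j l] unfolding hint_eq
  by (cases "\<exists>s<t. Zs s = z") auto

lemma cum_loss_gap:
  assumes "s < t" "\<And>s'. s < s' \<Longrightarrow> s' < t \<Longrightarrow> Zs s' \<noteq> z"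
  shows "cum_loss j z t l = cum_loss j z (Suc s) l"
  using assms
proof (induction t)
  case 0
  then show ?case by simp
next
  case (Suc t)
  then show ?case by (cases "s = t") (auto simp: cum_loss_Suc)
qed

text \<open>Between two consecutive visits of a context, the hinted losses of every action move by at
  most 3: the new loss enters the cumulative loss and replaces the old hint.\<close>
lemma hinted_loss_drift:
  assumes visited: "\<exists>s<t. Zs s = Zs t" and "t < T" "j < J" "l < K"
  shows "\<bar>hinted_loss j (Zs t) t l - hinted_loss j (Zs t) (last_visit (Zs t) t) l\<bar> \<le> 3"
proof -
  define s where "s = last_visit (Zs t) t"
  have s: "s < t" "Zs s = Zs t" "\<And>s'. s < s' \<Longrightarrow> s' < t \<Longrightarrow> Zs s' \<noteq> Zs t"
    using last_visit[OF visited] unfolding s_def by auto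
  have "cum_loss j (Zs t) t l = cum_loss j (Zs t) s l + loss s j l"
    using cum_loss_gap[OF s(1) s(3)] s(2) by (simp add: cum_loss_Suc)
  moreover have "hint j (Zs t) t l = loss s j l" using visited unfolding hint_eq s_def by simp
  moreover have "\<bar>loss s j l\<bar> \<le> 1" "\<bar>hint j (Zs t) s l\<bar> \<le> 1"
    using abs_loss_le_1 abs_hint_le_1 s assms by auto
  ultimately show ?thesis unfolding s_def[symmetric] hinted_loss_def by linarith
qed

definition "regret j u =
  (\<Sum>t<T. (\<Sum>l<K. play t j l * loss t j l) - (\<Sum>l<K. u (Zs t) l * loss t j l))"

definition "mispredictions i = card {t. t < T \<and> preds i t \<noteq> Zs t}"

lemma sum_cum_loss_contexts:
  "(\<Sum>z\<in>Zs ` {..<T}. \<Sum>l<K. u z l * cum_loss j z T l) = (\<Sum>t<T. \<Sum>l<K. u (Zs t) l * loss t j l)"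
proof -
  have "(\<Sum>l<K. u z l * cum_loss j z T l) = (\<Sum>t<T. if Zs t = z then (\<Sum>l<K. u z l * loss t j l) else 0)"
    for z
    unfolding cum_loss_def sum_distrib_left
    by (subst sum.swap) (auto intro!: sum.cong)
  then have "(\<Sum>z\<in>Zs ` {..<T}. \<Sum>l<K. u z l * cum_loss j z T l)
      = (\<Sum>z\<in>Zs ` {..<T}. \<Sum>t<T. if Zs t = z then (\<Sum>l<K. u z l * loss t j l) else 0)"
    by simp
  also have "\<dots> = (\<Sum>t<T. \<Sum>z\<in>Zs ` {..<T}. if Zs t = z then (\<Sum>l<K. u z l * loss t j l) else 0)"
    by (rule sum.swap)
  also have "\<dots> = (\<Sum>t<T. \<Sum>l<K. u (Zs t) l * loss t j l)"
    by (intro sum.cong refl) (simp add: sum.delta)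
  finally show ?thesis .
qed

text \<open>Telescoping the potential of optimistic Hedge separately in each context.\<close>
lemma clairvoyant_regret:
  assumes eta: "eta > 0" and j: "j < J" and u: "\<forall>t<T. u (Zs t) \<in> simplex K"
    and D: "\<forall>t<T. \<forall>l<K. \<bar>loss t j l - hint j (Zs t) t l\<bar> \<le> D t"
    and eD: "\<forall>t<T. eta * D t \<le> 1"
  shows "(\<Sum>t<T. \<Sum>l<K. clairvoyant_play t j l * loss t j l)
      \<le> (\<Sum>t<T. \<Sum>l<K. u (Zs t) l * loss t j l) + real (card (Zs ` {..<T})) * ln (real K) / eta
        + eta * (\<Sum>t<T. (D t)\<^sup>2)"
proof -
  define pot where "pot t = (\<Sum>z\<in>Zs ` {..<T}. softmin_potential K eta (cum_loss j z t))" for t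
  have step: "(\<Sum>l<K. clairvoyant_play t j l * loss t j l) \<le> eta * (D t)\<^sup>2 + (pot (Suc t) - pot t)"
    if t: "t < T" for t
  proof -
    have "pot (Suc t) - pot t = (\<Sum>z\<in>Zs ` {..<T}.
        if Zs t = z then softmin_potential K eta (cum_loss j z (Suc t))
          - softmin_potential K eta (cum_loss j z t) else 0)"
      unfolding pot_def sum_subtractf[symmetric]
      by (intro sum.cong refl) (auto simp: cum_loss_Suc[abs_def])
    also have "\<dots> = softmin_potential K eta (cum_loss j (Zs t) (Suc t))
        - softmin_potential K eta (cum_loss j (Zs t) t)"
      using t by (subst sum.delta') auto
    finally have "pot (Suc t) - pot t = softmin_potential K eta (\<lambda>k. cum_loss j (Zs t) t k + loss t j k)
        - softmin_potential K eta (cum_loss j (Zs t) t)"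
      by (simp add: cum_loss_Suc[abs_def])
    moreover have "(\<Sum>l<K. clairvoyant_play t j l * loss t j l)
        + softmin_potential K eta (cum_loss j (Zs t) t)
        - softmin_potential K eta (\<lambda>k. cum_loss j (Zs t) t k + loss t j k) \<le> eta * (D t)\<^sup>2"
      unfolding clairvoyant_play_def hinted_loss_def
      using t D eD by (intro optimistic_hedge_step[OF K_pos eta]) auto
    ultimately show ?thesis by simp
  qed
  have "(\<Sum>t<T. \<Sum>l<K. clairvoyant_play t j l * loss t j l) \<le> (\<Sum>t<T. eta * (D t)\<^sup>2 + (pot (Suc t) - pot t))"
    using step by (intro sum_mono) auto
  also have "\<dots> = eta * (\<Sum>t<T. (D t)\<^sup>2) + (pot T - pot 0)"
    by (simp add: sum.distrib sum_distrib_left sum_lessThan_telescope)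
  also have "pot 0 = 0"
    unfolding pot_def cum_loss_def using softmin_potential_zero[OF K_pos] by simp
  also have "pot T \<le> (\<Sum>z\<in>Zs ` {..<T}. (\<Sum>l<K. u z l * cum_loss j z T l) + ln (real K) / eta)"
    unfolding pot_def using u by (intro sum_mono softmin_potential_le[OF K_pos eta]) auto
  also have "\<dots> = (\<Sum>t<T. \<Sum>l<K. u (Zs t) l * loss t j l) + real (card (Zs ` {..<T})) * ln (real K) / eta"
    by (simp add: sum.distrib sum_cum_loss_contexts)
  finally show ?thesis by simp
qed

lemma regret_vs_clairvoyant_le:
  assumes "j < J"
  shows "(\<Sum>t<T. (\<Sum>l<K. play t j l * loss t j l) - (\<Sum>l<K. clairvoyant_play t j l * loss t j l))
    \<le> 2 * real (mispredictions j)"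
proof -
  have "(\<Sum>l<K. play t j l * loss t j l) - (\<Sum>l<K. clairvoyant_play t j l * loss t j l)
      \<le> (if preds j t \<noteq> Zs t then 2 else 0)" if "t < T" for t
  proof (cases "preds j t = Zs t")
    case True
    then show ?thesis using play_eq_clairvoyant by simp
  next
    case False
    have "\<forall>l<K. \<bar>loss t j l\<bar> \<le> 1" using abs_loss_le_1 that assms by auto
    then have "\<bar>\<Sum>l<K. play t j l * loss t j l\<bar> \<le> 1" "\<bar>\<Sum>l<K. clairvoyant_play t j l * loss t j l\<bar> \<le> 1"
      using sum_simplex_mult_abs_le_1 play_in_simplex clairvoyant_play_in_simplex by auto
    then show ?thesis using False by simp
  qed
  then have "(\<Sum>t<T. (\<Sum>l<K. play t j l * loss t j l) - (\<Sum>l<K. clairvoyant_play t j l * loss t j l))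
      \<le> (\<Sum>t<T. if preds j t \<noteq> Zs t then 2 else 0)"
    by (intro sum_mono) auto
  also have "\<dots> = 2 * real (mispredictions j)" unfolding mispredictions_def by (rule sum_if_const_card)
  finally show ?thesis .
qed

lemma regret_le_2T:
  assumes "j < J" and "\<forall>t<T. u (Zs t) \<in> simplex K"
  shows "regret j u \<le> 2 * real T"
proof -
  have "(\<Sum>l<K. play t j l * loss t j l) - (\<Sum>l<K. u (Zs t) l * loss t j l) \<le> 2" if "t < T" for t
  proof -
    have "\<forall>l<K. \<bar>loss t j l\<bar> \<le> 1" using abs_loss_le_1 that assms by auto
    then have "\<bar>\<Sum>l<K. play t j l * loss t j l\<bar> \<le> 1" "\<bar>\<Sum>l<K. u (Zs t) l * loss t j l\<bar> \<le> 1"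
      using sum_simplex_mult_abs_le_1 play_in_simplex assms that by auto
    then show ?thesis by linarith
  qed
  then have "regret j u \<le> (\<Sum>t<T. 2)" unfolding regret_def by (intro sum_mono) auto
  then show ?thesis by simp
qed

definition "stable_round j t \<longleftrightarrow> (\<exists>s<t. Zs s = Zs t) \<and>
   (\<forall>i<J. i \<noteq> j \<longrightarrow> preds i t = Zs t \<and> preds i (last_visit (Zs t) t) = Zs t)"

text \<open>In a stable round the other agents played their clairvoyant strategies now and at the
  previous visit, and these are softmaxes of hinted losses that drifted by at most 3.\<close>
lemma loss_hint_error_stable:
  assumes eta: "eta \<ge> 0" "12 * eta \<le> 1" and "j < J" "t < T" "l < K" and stable: "stable_round j t"
  shows "\<bar>loss t j l - hint j (Zs t) t l\<bar> \<le> 24 * eta * real J"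
proof -
  have visited: "\<exists>s<t. Zs s = Zs t" using stable unfolding stable_round_def by auto
  define s where "s = last_visit (Zs t) t"
  have s: "s < t" "Zs s = Zs t" using last_visit[OF visited] unfolding s_def by auto
  have "(\<Sum>k<K. \<bar>play t i k - play s i k\<bar>) \<le> 24 * eta" if i: "i \<in> {..<J} - {j}" for i
  proof -
    have "play t i = clairvoyant_play t i" "play s i = clairvoyant_play s i"
      using stable i s unfolding stable_round_def s_def by (auto intro: play_eq_clairvoyant)
    then have "(\<Sum>k<K. \<bar>play t i k - play s i k\<bar>)
        = (\<Sum>k<K. \<bar>softmax K eta (hinted_loss i (Zs t) t) k - softmax K eta (hinted_loss i (Zs t) s) k\<bar>)"
      unfolding clairvoyant_play_def s(2) by simp
    also have "\<dots> \<le> 8 * eta * 3"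
      using hinted_loss_drift[OF visited] i assms unfolding s_def
      by (intro softmax_l1_stable[OF K_pos]) auto
    finally show ?thesis by simp
  qed
  then have "(\<Sum>i\<in>{..<J} - {j}. \<Sum>k<K. \<bar>play t i k - play s i k\<bar>) \<le> real (card ({..<J} - {j})) * (24 * eta)"
    using sum_mono[of "{..<J} - {j}" _ "\<lambda>_. 24 * eta"] by simp
  also have "\<dots> \<le> real J * (24 * eta)"
    using eta card_mono[of "{..<J}" "{..<J} - {j}"] by (intro mult_right_mono) auto
  finally have "\<bar>loss t j l - loss s j l\<bar> \<le> 24 * eta * real J"
    using abs_loss_diff_le[of t s j l] s assms by (simp add: mult_ac)
  moreover have "hint j (Zs t) t l = loss s j l" using visited unfolding hint_eq s_def by simp
  ultimately show ?thesis by simp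
qed

lemma card_mispredicted_last_visits_le:
  "card {t. t < T \<and> (\<exists>s<t. Zs s = Zs t) \<and> preds i (last_visit (Zs t) t) \<noteq> Zs t} \<le> mispredictions i"
  unfolding mispredictions_def
proof (rule card_inj_on_le)
  let ?A = "{t. t < T \<and> (\<exists>s<t. Zs s = Zs t) \<and> preds i (last_visit (Zs t) t) \<noteq> Zs t}"
  show "inj_on (\<lambda>t. last_visit (Zs t) t) ?A"
  proof (rule inj_onI)
    fix x y assume "x \<in> ?A" "y \<in> ?A" and eq: "last_visit (Zs x) x = last_visit (Zs y) y"
    then have x: "last_visit (Zs x) x < x" "Zs (last_visit (Zs x) x) = Zs x"
      and y: "last_visit (Zs y) y < y" "Zs (last_visit (Zs y) y) = Zs y"
      using last_visit[of x "Zs x"] last_visit[of y "Zs y"] by auto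
    then have "Zs x = Zs y" using eq by metis
    then have "x < y \<Longrightarrow> x \<le> last_visit (Zs y) y" "y < x \<Longrightarrow> y \<le> last_visit (Zs x) x"
      using le_last_visit by auto
    then show "x = y" using x(1) y(1) eq by linarith
  qed
  show "(\<lambda>t. last_visit (Zs t) t) ` ?A \<subseteq> {t. t < T \<and> preds i t \<noteq> Zs t}"
  proof
    fix p assume "p \<in> (\<lambda>t. last_visit (Zs t) t) ` ?A"
    then obtain t where "t \<in> ?A" "p = last_visit (Zs t) t" by blast
    then show "p \<in> {t. t < T \<and> preds i t \<noteq> Zs t}" using last_visit[of t "Zs t"] by auto
  qed
qed simp

lemma card_unstable_rounds_le:
  "card {t. t < T \<and> \<not> stable_round j t}
    \<le> card (Zs ` {..<T}) + 2 * (\<Sum>i<J. mispredictions i)"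
proof -
  define F where "F = {t. t < T \<and> \<not> (\<exists>s<t. Zs s = Zs t)}"
  define M where "M i = {t. t < T \<and> preds i t \<noteq> Zs t}" for i
  define P where "P i = {t. t < T \<and> (\<exists>s<t. Zs s = Zs t) \<and> preds i (last_visit (Zs t) t) \<noteq> Zs t}" for i
  have "card {t. t < T \<and> \<not> stable_round j t} \<le> card (F \<union> (\<Union>i<J. M i) \<union> (\<Union>i<J. P i))"
    by (intro card_mono) (auto simp: F_def M_def P_def stable_round_def)
  also have "\<dots> \<le> card F + card (\<Union>i<J. M i) + card (\<Union>i<J. P i)"
    by (meson add_le_mono1 card_Un_le le_trans)
  also have "\<dots> \<le> card F + (\<Sum>i<J. card (M i)) + (\<Sum>i<J. card (P i))"
    using card_UN_le[of "{..<J}" M] card_UN_le[of "{..<J}" P] by (intro add_mono) auto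
  also have "\<dots> \<le> card (Zs ` {..<T}) + (\<Sum>i<J. mispredictions i) + (\<Sum>i<J. mispredictions i)"
    using card_first_occurrences_le card_mispredicted_last_visits_le
    unfolding F_def M_def P_def mispredictions_def by (intro add_mono sum_mono) simp_all
  finally show ?thesis by simp
qed

lemma regret_le:
  assumes eta: "eta > 0" and small: "576 * eta\<^sup>2 * real J \<le> 1" and j: "j < J"
    and u: "\<forall>t<T. u (Zs t) \<in> simplex K"
  shows "regret j u
     \<le> 2 * real (mispredictions j) + real (card (Zs ` {..<T})) * ln (real K) / eta
       + eta * (real T * (24 * eta * real J)\<^sup>2
         + 4 * (real (card (Zs ` {..<T})) + 2 * real (\<Sum>i<J. mispredictions i)))"
proof -
  define D where "D t = (if stable_round j t then 24 * eta * real J else 2)" for t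
  have "576 * eta\<^sup>2 * 1 \<le> 576 * eta\<^sup>2 * real J" using j by (intro mult_left_mono) auto
  then have "(24 * eta)\<^sup>2 \<le> 1\<^sup>2" using small by (simp add: power2_eq_square)
  then have eta24: "24 * eta \<le> 1" by (rule power2_le_imp_le) simp
  have "\<forall>t<T. \<forall>l<K. \<bar>loss t j l - hint j (Zs t) t l\<bar> \<le> D t"
  proof (intro allI impI)
    fix t l assume "t < T" "l < K"
    then show "\<bar>loss t j l - hint j (Zs t) t l\<bar> \<le> D t"
      using loss_hint_error_stable[of j t l] abs_loss_le_1[of t j l] abs_hint_le_1[of t j l "Zs t"]
        eta eta24 j unfolding D_def by (auto simp: abs_diff_le_iff)
  qed
  moreover have "\<forall>t<T. eta * D t \<le> 1"
    using small eta24 unfolding D_def by (auto simp: power2_eq_square mult_ac)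
  ultimately have clairvoyant: "(\<Sum>t<T. \<Sum>l<K. clairvoyant_play t j l * loss t j l)
      \<le> (\<Sum>t<T. \<Sum>l<K. u (Zs t) l * loss t j l) + real (card (Zs ` {..<T})) * ln (real K) / eta
        + eta * (\<Sum>t<T. (D t)\<^sup>2)"
    by (rule clairvoyant_regret[OF eta j u])
  have "(\<Sum>t<T. (D t)\<^sup>2) \<le> (\<Sum>t<T. (24 * eta * real J)\<^sup>2 + (if \<not> stable_round j t then 4 else 0))"
    unfolding D_def by (intro sum_mono) auto
  also have "\<dots> = real T * (24 * eta * real J)\<^sup>2 + 4 * real (card {t. t < T \<and> \<not> stable_round j t})"
    by (simp add: sum.distrib sum_if_const_card)
  also have "\<dots> \<le> real T * (24 * eta * real J)\<^sup>2
      + 4 * (real (card (Zs ` {..<T})) + 2 * real (\<Sum>i<J. mispredictions i))"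
    using of_nat_mono[OF card_unstable_rounds_le[of j], where 'a = real]
    by (simp only: of_nat_add of_nat_mult of_nat_numeral) (simp add: ring_distribs)
  finally have "eta * (\<Sum>t<T. (D t)\<^sup>2) \<le> eta * (real T * (24 * eta * real J)\<^sup>2
      + 4 * (real (card (Zs ` {..<T})) + 2 * real (\<Sum>i<J. mispredictions i)))"
    using eta by (intro mult_left_mono) auto
  then show ?thesis
    using clairvoyant regret_vs_clairvoyant_le[OF j] unfolding regret_def sum_subtractf by linarith
qed

subsection \<open>The empirical equilibrium\<close>

abbreviation "visits z \<equiv> {s. s < T \<and> Zs s = z}"

abbreviation "nu \<equiv> nu_hat J K Zs T play"

lemma nu_hat_eq:
  "t < T \<Longrightarrow> a \<in> profiles J K \<Longrightarrow>
    nu (Zs t) a = (\<Sum>s\<in>visits (Zs t). \<Prod>i<J. play s i (a i)) / real (card (visits (Zs t)))"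
  unfolding nu_hat_def by (subst card_gt_0_iff) auto

lemma cost_nu_hat:
  assumes t: "t < T" and j: "j < J"
  shows "cost J K d phi (nu (Zs t)) j (Zs t)
       = (\<Sum>s\<in>visits (Zs t). \<Sum>l<K. play s j l * loss s j l) / real (card (visits (Zs t)))"
proof -
  have "(\<Sum>a\<in>profiles J K. (\<Prod>i<J. play s i (a i)) * ip d (phi j a) (Zs t))
      = (\<Sum>l<K. play s j l * loss s j l)" if "s \<in> visits (Zs t)" for s
    using sum_profiles_split_agent[OF j, of "play s" "\<lambda>a. ip d (phi j a) (Zs t)"] that
    unfolding loss_eq by simp
  then have key: "(\<Sum>s\<in>visits (Zs t). \<Sum>a\<in>profiles J K. (\<Prod>i<J. play s i (a i)) * ip d (phi j a) (Zs t))
      = (\<Sum>s\<in>visits (Zs t). \<Sum>l<K. play s j l * loss s j l)" by simp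
  have "cost J K d phi (nu (Zs t)) j (Zs t) = (\<Sum>a\<in>profiles J K.
      (\<Sum>s\<in>visits (Zs t). \<Prod>i<J. play s i (a i)) / real (card (visits (Zs t))) * ip d (phi j a) (Zs t))"
    unfolding cost_def using nu_hat_eq[OF t] by (intro sum.cong refl) auto
  also have "\<dots> = (\<Sum>a\<in>profiles J K. \<Sum>s\<in>visits (Zs t).
      (\<Prod>i<J. play s i (a i)) * ip d (phi j a) (Zs t)) / real (card (visits (Zs t)))"
    by (simp add: sum_divide_distrib sum_distrib_right)
  also have "\<dots> = (\<Sum>s\<in>visits (Zs t). \<Sum>l<K. play s j l * loss s j l) / real (card (visits (Zs t)))"
    by (subst sum.swap) (simp only: key)
  finally show ?thesis .
qed

lemma marg_minus_nu_hat:
  assumes t: "t < T" and j: "j < J" and b: "b \<in> others J K j"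
  shows "marg_minus K (nu (Zs t)) j b
       = (\<Sum>s\<in>visits (Zs t). \<Prod>i\<in>{..<J} - {j}. play s i (b i)) / real (card (visits (Zs t)))"
proof -
  have J: "insert j ({..<J} - {j}) = {..<J}" using j by auto
  have one: "(\<Sum>k<K. \<Prod>i<J. play s i ((b(j := k)) i)) = (\<Prod>i\<in>{..<J} - {j}. play s i (b i))" for s
    using prod_fun_upd_insert[of j "{..<J} - {j}" "play s" b] play_in_simplex[of s j]
    unfolding J by (simp add: simplex_def flip: sum_distrib_right)
  have "marg_minus K (nu (Zs t)) j b = (\<Sum>k<K. (\<Sum>s\<in>visits (Zs t).
      \<Prod>i<J. play s i ((b(j := k)) i)) / real (card (visits (Zs t))))"
    unfolding marg_minus_def using nu_hat_eq[OF t fun_upd_in_profiles[OF b j]] by (intro sum.cong) auto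
  also have "\<dots> = (\<Sum>s\<in>visits (Zs t). \<Sum>k<K. \<Prod>i<J. play s i ((b(j := k)) i))
      / real (card (visits (Zs t)))"
    by (subst sum.swap) (simp add: sum_divide_distrib)
  finally show ?thesis unfolding one .
qed

lemma dev_cost_nu_hat:
  assumes t: "t < T" and j: "j < J"
  shows "dev_cost J K d phi w (nu (Zs t)) j (Zs t)
       = (\<Sum>s\<in>visits (Zs t). \<Sum>k<K. w k * loss s j k) / real (card (visits (Zs t)))"
proof -
  define n where "n = real (card (visits (Zs t)))"
  have "(\<Sum>b\<in>others J K j. marg_minus K (nu (Zs t)) j b * ip d (phi j (b(j := k))) (Zs t))
      = (\<Sum>s\<in>visits (Zs t). loss s j k) / n" for k
  proof -
    have "(\<Sum>b\<in>others J K j. marg_minus K (nu (Zs t)) j b * ip d (phi j (b(j := k))) (Zs t))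
        = (\<Sum>b\<in>others J K j. \<Sum>s\<in>visits (Zs t).
            (\<Prod>i\<in>{..<J} - {j}. play s i (b i)) * ip d (phi j (b(j := k))) (Zs t)) / n"
      unfolding n_def sum_divide_distrib
      by (intro sum.cong refl) (simp add: marg_minus_nu_hat[OF t j] sum_divide_distrib sum_distrib_right)
    also have "\<dots> = (\<Sum>s\<in>visits (Zs t). loss s j k) / n"
      unfolding loss_eq by (subst sum.swap) (auto intro!: sum.cong arg_cong[where f = "\<lambda>x. x / n"])
    finally show ?thesis .
  qed
  note inner = this
  have "dev_cost J K d phi w (nu (Zs t)) j (Zs t) = (\<Sum>k<K. w k *
      (\<Sum>b\<in>others J K j. marg_minus K (nu (Zs t)) j b * ip d (phi j (b(j := k))) (Zs t)))"
    unfolding dev_cost_def sum_distrib_left by (subst sum.swap) (simp add: mult.assoc)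
  also have "\<dots> = (\<Sum>k<K. w k * ((\<Sum>s\<in>visits (Zs t). loss s j k) / n))"
    unfolding inner ..
  also have "\<dots> = (\<Sum>s\<in>visits (Zs t). \<Sum>k<K. w k * loss s j k) / n"
    by (simp add: sum_divide_distrib sum_distrib_left sum.swap[of _ "{..<K}"])
  finally show ?thesis unfolding n_def .
qed

lemma sum_cost_nu_hat:
  "j < J \<Longrightarrow> (\<Sum>t<T. cost J K d phi (nu (Zs t)) j (Zs t)) = (\<Sum>t<T. \<Sum>l<K. play t j l * loss t j l)"
  using sum_context_averages[where Zs = Zs and T = T and f = "\<lambda>s. \<Sum>l<K. play s j l * loss s j l"] by (simp add: cost_nu_hat)

lemma sum_dev_cost_nu_hat:
  assumes "j < J"
  shows "(\<Sum>t<T. dev_cost J K d phi (\<pi> (Zs t)) (nu (Zs t)) j (Zs t))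
       = (\<Sum>t<T. \<Sum>l<K. \<pi> (Zs t) l * loss t j l)"
proof -
  have "(\<Sum>s\<in>visits (Zs t). \<Sum>k<K. \<pi> (Zs t) k * loss s j k)
      = (\<Sum>s\<in>visits (Zs t). \<Sum>k<K. \<pi> (Zs s) k * loss s j k)" for t
    by (intro sum.cong refl) auto
  then show ?thesis
    using sum_context_averages[where Zs = Zs and T = T and f = "\<lambda>s. \<Sum>k<K. \<pi> (Zs s) k * loss s j k"]
    by (simp add: dev_cost_nu_hat assms)
qed

text \<open>Both sides of the equilibrium inequality for the empirical map are averages of realized
  costs, so the equilibrium gap is the regret divided by T.\<close>
lemma nu_hat_contextual_CCE:
  assumes Zset: "\<forall>t<T. Zs t \<in> Zset" and eps: "eps \<ge> 0"
    and regret: "\<And>j \<pi>. j < J \<Longrightarrow> \<forall>t<T. \<pi> (Zs t) \<in> simplex K \<Longrightarrow> regret j \<pi> \<le> real T * eps"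
  shows "contextual_CCE J K d phi Zset Zs T nu eps"
  unfolding contextual_CCE_def
proof (intro allI impI)
  fix j \<pi> assume j: "j < J" and \<pi>: "\<forall>z\<in>Zset. \<pi> z \<in> simplex K"
  have "(\<Sum>t<T. cost J K d phi (nu (Zs t)) j (Zs t))
      - (\<Sum>t<T. dev_cost J K d phi (\<pi> (Zs t)) (nu (Zs t)) j (Zs t)) \<le> real T * eps"
    using regret[OF j] \<pi> Zset unfolding sum_cost_nu_hat[OF j] sum_dev_cost_nu_hat[OF j] regret_def
    by (simp add: sum_subtractf)
  then show "(\<Sum>t<T. cost J K d phi (nu (Zs t)) j (Zs t)) / real T
      \<le> (\<Sum>t<T. dev_cost J K d phi (\<pi> (Zs t)) (nu (Zs t)) j (Zs t)) / real T + eps"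
    using eps by (cases "T = 0") (auto simp: field_simps)
qed

lemma regret_single_action:
  assumes "K = 1" and "\<forall>t<T. u (Zs t) \<in> simplex K"
  shows "regret j u = 0"
  using assms play_in_simplex unfolding regret_def by (auto simp: simplex_def intro!: sum.neutral)

lemma regret_le_tuned:
  fixes L m :: real
  assumes j: "j < J" and u: "\<forall>t<T. u (Zs t) \<in> simplex K"
    and L: "\<forall>i<J. real (mispredictions i) \<le> L" and m: "real (card (Zs ` {..<T})) \<le> m"
    and TL: "real J ^ 2 * L \<le> real T"
    and eta_tuned: "eta = real J powr (-1/2) * real T powr (-1/4) * (ln (real K) * (L + m)) powr (1/4)"
  shows "regret j u
    \<le> real T * (30000 * (ln (real K) * (L + m)) powr (3/4) * real T powr (-3/4) * real J powr (1/2))"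
proof (cases "K = 1 \<or> T = 0")
  case True
  then have "regret j u = 0"
  proof
    assume "K = 1"
    then show ?thesis using regret_single_action[OF _ u] by blast
  qed (unfold regret_def, simp)
  then show ?thesis by simp
next
  case False
  then have K: "K \<ge> 2" and T: "T > 0" using K_pos by auto
  define X where "X = ln (real K) * (L + m)"
  have lnK: "ln (real K) \<ge> 1 / 2" using K by (intro half_le_ln) simp
  have L0: "L \<ge> 0" using L j by (meson of_nat_0_le_iff order_trans)
  have "card (Zs ` {..<T}) \<ge> 1" using T by (simp add: Suc_le_eq card_gt_0_iff lessThan_empty_iff)
  then have m1: "m \<ge> 1" using m by linarith
  have X: "X > 0" unfolding X_def using lnK L0 m1 by simp
  have J: "real J \<ge> 1" using j by simp
  obtain eta: "eta > 0" and rate: "eta ^ 4 * (real J)\<^sup>2 * real T = X"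
    and eps: "real T * (X powr (3/4) * real T powr (-3/4) * real J powr (1/2)) = X / eta"
    using tuned_learning_rate[of "real J" "real T" X eta] J T X eta_tuned unfolding X_def by auto
  have "regret j u \<le> 30000 * (X / eta)"
  proof (cases "576 * eta\<^sup>2 * real J \<le> 1")
    case True
    have S: "real (\<Sum>i<J. mispredictions i) \<le> real J * L"
      using L sum_mono[of "{..<J}" "\<lambda>i. real (mispredictions i)" "\<lambda>_. L"] by simp
    have "real (mispredictions j) \<le> L" using L j by simp
    from tuned_regret_terms_le[OF eta J True rate X_def lnK L0 m1 m this S TL]
    have "regret j u \<le> 583 * (X / eta)" using regret_le[OF eta True j u] by linarith
    moreover have "X / eta > 0" using X eta by simp
    ultimately show ?thesis by linarith
  next
    case False
    then show ?thesis
      using regret_le_2T[OF j u] tuned_trivial_bound_le[OF eta J _ _ rate] by simp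
  qed
  also have "\<dots> = real T * (30000 * X powr (3/4) * real T powr (-3/4) * real J powr (1/2))"
    unfolding eps[symmetric] by (simp add: mult_ac)
  finally show ?thesis unfolding X_def .
qed

end

theorem pomwu_contextual_CCE:
  fixes J K d T :: nat and phi :: "nat \<Rightarrow> (nat \<Rightarrow> nat) \<Rightarrow> nat \<Rightarrow> real"
    and Zset :: "(nat \<Rightarrow> real) set" and Zs :: "nat \<Rightarrow> nat \<Rightarrow> real"
    and preds :: "nat \<Rightarrow> nat \<Rightarrow> nat \<Rightarrow> real"
  defines "L \<equiv> real (Lbar J T preds Zs)" and "m \<equiv> real (card Zset)"
  defines "eta \<equiv> real J powr (-1/2) * real T powr (-1/4) * (ln (real K) * (L + m)) powr (1/4)"
  assumes "J \<ge> 1" "K \<ge> 1" "finite Zset" "\<forall>t<T. Zs t \<in> Zset"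
    and "\<forall>j<J. \<forall>a\<in>profiles J K. \<forall>z\<in>Zset. \<bar>ip d (phi j a) z\<bar> \<le> 1"
    and TL: "real J ^ 2 * L \<le> real T"
  shows "contextual_CCE J K d phi Zset Zs T
    (nu_hat J K Zs T (\<lambda>t j. pomwu_play J K d phi Zs preds eta t j))
    (30000 * (ln (real K) * (L + m)) powr (3/4) * real T powr (-3/4) * real J powr (1/2))"
proof -
  interpret pomwu_run J K d phi Zs preds eta T
    using assms by unfold_locales auto
  have mispredictions: "\<forall>i<J. real (mispredictions i) \<le> L"
    unfolding mispredictions_def Lbar_def L_def by (auto intro: Max_ge)
  have contexts: "real (card (Zs ` {..<T})) \<le> m"
    unfolding m_def using assms by (auto intro: card_mono)
  have "contextual_CCE J K d phi Zset Zs T nu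
      (30000 * (ln (real K) * (L + m)) powr (3/4) * real T powr (-3/4) * real J powr (1/2))"
  proof (rule nu_hat_contextual_CCE)
    show "regret j \<pi> \<le> real T * (30000 * (ln (real K) * (L + m)) powr (3/4)
        * real T powr (-3/4) * real J powr (1/2))"
      if "j < J" and "\<forall>t<T. \<pi> (Zs t) \<in> simplex K" for j \<pi>
      using regret_le_tuned[OF that mispredictions contexts TL] eta_def by simp
  qed (use assms in auto)
  then show ?thesis unfolding play_def[abs_def] .
qed

theorem corollary1:
  "\<exists>c0>0. \<exists>ceta>0. \<exists>C>0. \<forall>(J::nat) (K::nat) (d::nat)
       (phi :: nat \<Rightarrow> (nat \<Rightarrow> nat) \<Rightarrow> nat \<Rightarrow> real) (Zset :: (nat \<Rightarrow> real) set)
       (Zs :: nat \<Rightarrow> nat \<Rightarrow> real) (preds :: nat \<Rightarrow> nat \<Rightarrow> nat \<Rightarrow> real) (T::nat).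
     J \<ge> 2 \<and> K \<ge> 1 \<and> finite Zset \<and> Zset \<subseteq> vecs d
     \<and> (\<forall>t<T. Zs t \<in> Zset) \<and> (\<forall>j<J. \<forall>t<T. preds j t \<in> Zset)
     \<and> (\<forall>j<J. \<forall>a\<in>profiles J K. \<forall>z\<in>Zset. \<bar>ip d (phi j a) z\<bar> \<le> 1)
     \<and> real T \<ge> c0 * real J ^ 2 * real (Lbar J T preds Zs)
     \<longrightarrow> (let L = real (Lbar J T preds Zs); m = real (card Zset);
             eta = ceta * real J powr (-1/2) * real T powr (-1/4) * (ln (real K) * (L + m)) powr (1/4)
         in contextual_CCE J K d phi Zset Zs T
              (nu_hat J K Zs T (\<lambda>t j. pomwu_play J K d phi Zs preds eta t j))
              (C * (ln (real K) * (L + m)) powr (3/4) * real T powr (-3/4) * real J powr (1/2)))"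
proof (rule exI[of _ 1], intro conjI zero_less_one, rule exI[of _ 1], intro conjI zero_less_one,
    rule exI[of _ 30000], intro conjI allI impI)
  show "(0::real) < 30000" by simp
qed (unfold Let_def mult_1, elim conjE, rule pomwu_contextual_CCE, auto)

end
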